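(* Assume $V$ satisfies (V.1) and (V.2). Then $\mathrm{dom}(|\Delta|^{1/2})\cap\mathrm{dom}((|V|_{\mathrm{eff}})^{1/2})=\mathrm{dom}(|\Delta|^{1/2})\cap\mathrm{dom}(|V_{\mathrm{eff}}|^{1/2})$ as subspaces of $L^2(\mathbb{R}^d)$.
   Context: Let $d\ge2$, $\hbar,m,\epsilon_0>0$, $q\in\mathbb{R}\setminus\{0\}$, $\omega:\mathbb{R}^d\to[0,\infty)$ Borel with $\omega>0$ a.e., and $\hat\rho:\mathbb{R}^d\to\mathbb{R}$ Borel, radial, with $\hat\rho/\omega^{1/2},\hat\rho/\omega^{3/2}\in L^2(\mathbb{R}^d)\setminus\{0\}$. Set $a:=\frac{d-1}{4d}\frac{\hbar q^2}{\epsilon_0m^2}\int\frac{|\hat\rho(\boldsymbol{k})|^2}{\omega(\boldsymbol{k})^3}d\boldsymbol{k}$. For Borel $W$ satisfying (V.2), $W_{\mathrm{eff}}(\boldsymbol{x}):=(4\pi a)^{-d/2}\int W(\boldsymbol{y})e^{-|\boldsymbol{x}-\boldsymbol{y}|^2/(4a)}d\boldsymbol{y}$; $|V|_{\mathrm{eff}}$ is this applied to $|V|$, and $|V_{\mathrm{eff}}|$ is the absolute value of $V_{\mathrm{eff}}$. Domains $\mathrm{dom}(F^{1/2})$ for a non-negative function $F$ refer to the maximal multiplication operator. Conditions on Borel $V:\mathbb{R}^d\to\mathbb{R}$: (V.1) either (V.1-1) $|V|$ is infinitesimally form-bounded w.r.t. $-\Delta$, or (V.1-2) $V$ is bounded from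 below; (V.2) $\int|V(\boldsymbol{x})|e^{-t|\boldsymbol{x}|^2}d\boldsymbol{x}<\infty$ for all $t>0$. *)

theory Defs
  imports "HOL-Analysis.Analysis"
begin

definition L2 :: "('a::euclidean_space \<Rightarrow> complex) set" where
  "L2 = {f. f \<in> borel_measurable lborel \<and> integrable lborel (\<lambda>x. (cmod (f x))^2)}"

text \<open>Domain of the maximal multiplication operator F^(1/2), F \<ge> 0.\<close>
definition dom_mult_sqrt :: "('a::euclidean_space \<Rightarrow> real) \<Rightarrow> ('a \<Rightarrow> complex) set" where
  "dom_mult_sqrt F = {f \<in> L2. (\<integral>\<^sup>+x. ennreal (F x * (cmod (f x))^2) \<partial>lborel) < \<infinity>}"

definition trunc_fourier :: "real \<Rightarrow> ('a::euclidean_space \<Rightarrow> complex) \<Rightarrow> 'a \<Rightarrow> complex" where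
  "trunc_fourier R f k = complex_of_real ((2*pi) powr (-(real DIM('a))/2)) *
     (LINT x:ball 0 R|lborel. exp (- \<i> * complex_of_real (k \<bullet> x)) * f x)"

definition fourier_plancherel :: "('a::euclidean_space \<Rightarrow> complex) \<Rightarrow> ('a \<Rightarrow> complex) \<Rightarrow> bool" where
  "fourier_plancherel f g \<longleftrightarrow> g \<in> L2 \<and>
     ((\<lambda>R. \<integral>\<^sup>+k. ennreal ((cmod (g k - trunc_fourier R f k))^2) \<partial>lborel) \<longlongrightarrow> 0) at_top"

text \<open>dom(|Delta|^(1/2)): |Delta| is unitarily equivalent via the Fourier transform to
  multiplication by |k|^2, so |Delta|^(1/2) corresponds to multiplication by |k|.\<close>
definition dom_sqrt_abs_laplacian :: "('a::euclidean_space \<Rightarrow> complex) set" where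
  "dom_sqrt_abs_laplacian = {f \<in> L2. \<exists>g. fourier_plancherel f g \<and>
      (\<integral>\<^sup>+k. ennreal ((norm k)^2 * (cmod (g k))^2) \<partial>lborel) < \<infinity>}"

text \<open>W \<ge> 0 is infinitesimally form-bounded w.r.t. -Delta (whose form is
  the integral of |k|^2 |f^(k)|^2 on dom(|Delta|^(1/2))).\<close>
definition inf_form_bounded_laplacian :: "('a::euclidean_space \<Rightarrow> real) \<Rightarrow> bool" where
  "inf_form_bounded_laplacian W \<longleftrightarrow>
     (\<forall>\<epsilon>>0. \<exists>C. \<forall>f\<in>dom_sqrt_abs_laplacian. \<forall>g. fourier_plancherel f g \<longrightarrow>
        (\<integral>\<^sup>+x. ennreal (W x * (cmod (f x))^2) \<partial>lborel)
          \<le> ennreal \<epsilon> * (\<integral>\<^sup>+k. ennreal ((norm k)^2 * (cmod (g k))^2) \<partial>lborel)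
            + ennreal C * (\<integral>\<^sup>+x. ennreal ((cmod (f x))^2) \<partial>lborel))"

definition coupling_const :: "nat \<Rightarrow> real \<Rightarrow> real \<Rightarrow> real \<Rightarrow> real \<Rightarrow>
    ('a::euclidean_space \<Rightarrow> real) \<Rightarrow> ('a \<Rightarrow> real) \<Rightarrow> real" where
  "coupling_const d hbar q eps0 m rho omega =
     (real d - 1) / (4 * real d) * (hbar * q^2 / (eps0 * m^2)) *
     (\<integral>k. (rho k)^2 / (omega k)^3 \<partial>lborel)"

definition gauss_smear :: "real \<Rightarrow> ('a::euclidean_space \<Rightarrow> real) \<Rightarrow> 'a \<Rightarrow> real" where
  "gauss_smear a W x = (4*pi*a) powr (-(real DIM('a))/2) *
     (\<integral>y. W y * exp (- ((norm (x - y))^2) / (4*a)) \<partial>lborel)"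

end

theory Submission
  imports Defs "HOL-Probability.Characteristic_Functions"
begin

(* V_eff is the convolution of V with the heat kernel at time a (positive, as rho / omega^(3/2)
   is not a.e. zero), so |V_eff| <= |V|_eff pointwise; this gives one inclusion.  For the other
   it suffices that |V|_eff <= |V_eff| + C, which holds when V is bounded below because the heat
   kernel has unit mass, or that dom(|Delta|^(1/2)) lies in dom(|V|_eff^(1/2)).  The latter
   follows from the form bound for |V|: the form of |V|_eff at f is a heat-kernel average of the
   forms of |V| at the translates of f, and translations preserve the L^2 norm and the kinetic
   energy.  That the Fourier-Plancherel transform of a translate is the phase-shifted transform
   rests on Plancherel's inequality for functions in L^1 and L^2, obtained by damping |f^|^2 with
   exp (-e |k|^2), applying Fubini (the Fourier transform of the Gaussian is a heat kernel) and
   letting e -> 0 with Fatou's lemma. *)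

lemma nn_integral_lborel_translate:
  fixes c :: "'a::euclidean_space"
  assumes [measurable]: "f \<in> borel_measurable borel"
  shows "(\<integral>\<^sup>+x. f (c + x) \<partial>lborel) = (\<integral>\<^sup>+x. f x \<partial>lborel)"
  by (subst (2) lborel_distr_plus[of c, symmetric]) (simp add: nn_integral_distr)

lemma integral_lborel_translate:
  fixes c :: "'a::euclidean_space" and f :: "'a \<Rightarrow> 'b::{banach, second_countable_topology}"
  assumes [measurable]: "f \<in> borel_measurable borel"
  shows "(\<integral>x. f (c + x) \<partial>lborel) = (\<integral>x. f x \<partial>lborel)"
  by (subst (2) lborel_distr_plus[of c, symmetric]) (simp add: integral_distr)

lemma integrable_lborel_translate:
  fixes c :: "'a::euclidean_space" and f :: "'a \<Rightarrow> 'b::{banach, second_countable_topology}"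
  assumes "integrable lborel f"
  shows "integrable lborel (\<lambda>x. f (c + x))"
proof -
  have [measurable]: "f \<in> borel_measurable borel" using assms by auto
  show ?thesis
    using assms by (subst (asm) lborel_distr_plus[of c, symmetric]) (simp add: integrable_distr_eq)
qed

lemma borel_measurable_cnj[measurable (raw)]:
  assumes "f \<in> borel_measurable M"
  shows "(\<lambda>x. cnj (f x)) \<in> borel_measurable M"
proof -
  have "cnj \<in> borel_measurable borel"
    by (intro borel_measurable_continuous_onI continuous_on_cnj continuous_on_id)
  then show ?thesis
    using measurable_compose[OF assms] by blast
qed

lemma (in pair_sigma_finite) integrable_product_mult:
  fixes f :: "_ \<Rightarrow> 'c::{real_normed_field,banach,second_countable_topology}"
  assumes f: "integrable M1 f" and g: "integrable M2 g"
  shows "integrable (M1 \<Otimes>\<^sub>M M2) (\<lambda>p. f (fst p) * g (snd p))"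
proof -
  have [measurable]: "f \<in> borel_measurable M1" "g \<in> borel_measurable M2"
    using f g by auto
  have "(\<integral>\<^sup>+p. ennreal (norm (f (fst p) * g (snd p))) \<partial>(M1 \<Otimes>\<^sub>M M2))
      = (\<integral>\<^sup>+x. ennreal (norm (f x)) \<partial>M1) * (\<integral>\<^sup>+y. ennreal (norm (g y)) \<partial>M2)"
    by (subst M2.nn_integral_fst[symmetric])
       (auto simp: norm_mult ennreal_mult nn_integral_cmult nn_integral_multc)
  also have "\<dots> < \<infinity>"
    using f g by (simp add: integrable_iff_bounded ennreal_mult_less_top)
  finally show ?thesis
    by (simp add: integrable_iff_bounded)
qed

lemma (in pair_sigma_finite) integral_product_mult:
  fixes f :: "_ \<Rightarrow> 'c::{real_normed_field,banach,second_countable_topology}"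
  assumes "integrable M1 f" and "integrable M2 g"
  shows "(\<integral>p. f (fst p) * g (snd p) \<partial>(M1 \<Otimes>\<^sub>M M2)) = integral\<^sup>L M1 f * integral\<^sup>L M2 g"
  using integral_fst'[OF integrable_product_mult[OF assms]] by simp

lemma norm_integral_le_nn_integral:
  "ennreal (norm (integral\<^sup>L M f)) \<le> (\<integral>\<^sup>+x. norm (f x) \<partial>M)"
  by (cases "integrable M f") (simp_all add: integral_norm_bound_ennreal not_integrable_integral_eq)

lemma norm_sq_eq_sum_Basis:
  fixes x :: "'a::euclidean_space"
  shows "(norm x)^2 = (\<Sum>b\<in>Basis. (x \<bullet> b)^2)"
  unfolding power2_norm_eq_inner by (subst euclidean_inner) (simp add: power2_eq_square)

lemma sqrt_power_eq_powr: "0 < x \<Longrightarrow> sqrt x ^ n = x powr (real n / 2)"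
  by (simp add: powr_half_sqrt[symmetric] powr_realpow[symmetric] powr_powr)

lemma ennreal_power2_norm_add_le:
  fixes a b :: "'a::real_normed_vector"
  shows "ennreal ((norm (a + b))^2) \<le> 2 * ennreal ((norm a)^2) + 2 * ennreal ((norm b)^2)"
proof -
  have "(norm (a + b))^2 \<le> (norm a + norm b)^2"
    by (intro power_mono norm_triangle_ineq) simp
  also have "\<dots> \<le> 2 * (norm a)^2 + 2 * (norm b)^2"
    using sum_squares_bound[of "norm a" "norm b"] by (simp add: power2_sum)
  finally have "(norm (a + b))^2 \<le> 2 * (norm a)^2 + 2 * (norm b)^2" .
  then have "ennreal ((norm (a + b))^2) \<le> ennreal (2 * (norm a)^2 + 2 * (norm b)^2)"
    by (rule ennreal_leI)
  also have "\<dots> = 2 * ennreal ((norm a)^2) + 2 * ennreal ((norm b)^2)"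
    using ennreal_plus[of "2 * (norm a)^2" "2 * (norm b)^2"]
      ennreal_mult[of 2 "(norm a)^2"] ennreal_mult[of 2 "(norm b)^2"]
    by simp
  finally show ?thesis .
qed

section \<open>Gaussian integrals and the heat kernel\<close>

lemma has_bochner_integral_std_normal_iexp:
  "has_bochner_integral lborel (\<lambda>x. std_normal_density x *\<^sub>R iexp (u * x)) (complex_of_real (exp (- (u^2) / 2)))"
proof -
  have "integrable lborel std_normal_density"
    using integrable_std_normal_moment[of 0] by simp
  then have "integrable lborel (\<lambda>x. std_normal_density x *\<^sub>R iexp (u * x))"
    by (rule Bochner_Integration.integrable_bound) (auto simp: norm_mult)
  moreover have "(\<integral>x. std_normal_density x *\<^sub>R iexp (u * x) \<partial>lborel) = complex_of_real (exp (- (u^2) / 2))"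
    using char_std_normal_distribution[THEN fun_cong, of u] by (simp add: char_def integral_density)
  ultimately show ?thesis
    by (simp add: has_bochner_integral_iff)
qed

text \<open>Rescaling the standard normal density by c = sqrt (2 e).\<close>
lemma has_bochner_integral_gaussian_iexp_real:
  fixes e s :: real
  assumes e: "e > 0"
  shows "has_bochner_integral lborel (\<lambda>t. complex_of_real (exp (- e * t^2)) * iexp (t * s))
           (complex_of_real (sqrt (pi/e) * exp (- (s^2) / (4*e))))"
proof -
  define c where "c = sqrt (2*e)"
  have c: "c > 0" "c^2 = 2*e" using e by (auto simp: c_def)
  define u where "u = s / c"
  let ?f = "\<lambda>x. std_normal_density x *\<^sub>R iexp (u * x)"
  have "has_bochner_integral lborel (\<lambda>t. ?f (0 + c * t)) (complex_of_real (exp (- (u^2) / 2)) /\<^sub>R c)"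
    using has_bochner_integral_std_normal_iexp[of u]
      lborel_has_bochner_integral_real_affine_iff[where c = c and f = ?f and t = 0] c
    by simp
  then have scaled: "has_bochner_integral lborel (\<lambda>t. complex_of_real (sqrt (2*pi)) * ?f (0 + c * t))
      (complex_of_real (sqrt (2*pi)) * (complex_of_real (exp (- (u^2) / 2)) /\<^sub>R c))"
    by (rule has_bochner_integral_mult_right)
  have integrand: "complex_of_real (sqrt (2*pi)) * ?f (0 + c * t)
      = complex_of_real (exp (- e * t^2)) * iexp (t * s)" for t
  proof -
    have density: "sqrt (2*pi) * std_normal_density (c * t) = exp (- e * t^2)"
      using c by (simp add: std_normal_density_def power_mult_distrib)
    have "u * (c * t) = t * s"
      using c by (simp add: u_def)
    then have phase: "iexp (u * (c * t)) = iexp (t * s)"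
      by (simp only:)
    have "complex_of_real (sqrt (2*pi)) * ?f (0 + c * t)
        = complex_of_real (sqrt (2*pi) * std_normal_density (c * t)) * iexp (u * (c * t))"
      by (simp add: scaleR_conv_of_real)
    then show ?thesis
      by (simp only: density phase)
  qed
  have integral_eq: "complex_of_real (sqrt (2*pi)) * (complex_of_real (exp (- (u^2) / 2)) /\<^sub>R c)
      = complex_of_real (sqrt (pi/e) * exp (- (s^2) / (4*e)))"
  proof -
    have "sqrt (2*pi) / c = sqrt (pi/e)"
      using e by (simp add: c_def real_sqrt_divide[symmetric])
    moreover have "- (u^2) / 2 = - (s^2) / (4*e)"
      using c by (simp add: u_def power_divide field_simps)
    ultimately have "sqrt (2*pi) * (inverse c * exp (- (u^2) / 2)) = sqrt (pi/e) * exp (- (s^2) / (4*e))"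
      by (metis divide_inverse mult.assoc)
    then show ?thesis
      by (simp only: scaleR_conv_of_real of_real_mult[symmetric])
  qed
  show ?thesis
    using scaled unfolding integrand integral_eq .
qed

lemma has_bochner_integral_gaussian_iexp:
  fixes w :: "'a::euclidean_space"
  assumes e: "e > 0"
  shows "has_bochner_integral lborel (\<lambda>k::'a. complex_of_real (exp (- e * (norm k)^2)) * iexp (k \<bullet> w))
           (complex_of_real ((sqrt (pi/e))^DIM('a) * exp (- ((norm w)^2) / (4*e))))"
proof -
  interpret P: product_sigma_finite "\<lambda>_::'a. lborel :: real measure"
    by unfold_locales
  define T where "T = (\<lambda>f::'a\<Rightarrow>real. \<Sum>b\<in>Basis. f b *\<^sub>R b)"
  have T_measurable: "T \<in> measurable (Pi\<^sub>M Basis (\<lambda>_. lborel)) borel"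
    unfolding T_def by measurable
  define \<phi> where "\<phi> = (\<lambda>b t. complex_of_real (exp (- e * t^2)) * iexp (t * (w \<bullet> b)))"
  have \<phi>: "has_bochner_integral lborel (\<phi> b) (complex_of_real (sqrt (pi/e) * exp (- ((w \<bullet> b)^2) / (4*e))))" for b
    unfolding \<phi>_def by (rule has_bochner_integral_gaussian_iexp_real[OF e])
  have T_inner: "T f \<bullet> b = f b" if "b \<in> Basis" for f b
    using that by (simp add: T_def inner_sum_left inner_Basis if_distrib sum.delta' cong: if_cong)
  have factorise: "complex_of_real (exp (- e * (norm (T f))^2)) * iexp (T f \<bullet> w) = (\<Prod>b\<in>Basis. \<phi> b (f b))" for f
  proof -
    have "exp (- e * (norm (T f))^2) = (\<Prod>b\<in>Basis. exp (- e * (f b)^2))"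
      by (simp add: norm_sq_eq_sum_Basis T_inner sum_distrib_left exp_sum sum_negf[symmetric])
    moreover have "iexp (T f \<bullet> w) = (\<Prod>b\<in>Basis. iexp (f b * (w \<bullet> b)))"
      by (simp add: T_def inner_sum_left inner_commute[of w] sum_distrib_left exp_sum)
    ultimately show ?thesis
      by (simp add: \<phi>_def prod.distrib)
  qed
  have "has_bochner_integral (Pi\<^sub>M Basis (\<lambda>_. lborel)) (\<lambda>f. \<Prod>b\<in>Basis. \<phi> b (f b))
      (\<Prod>b\<in>Basis. integral\<^sup>L lborel (\<phi> b))"
    using \<phi> by (simp add: has_bochner_integral_iff P.product_integrable_prod P.product_integral_prod)
  also have "(\<Prod>b\<in>Basis. integral\<^sup>L lborel (\<phi> b))
      = (\<Prod>b\<in>Basis. complex_of_real (sqrt (pi/e) * exp (- ((w \<bullet> b)^2) / (4*e))))"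
    using \<phi> by (simp add: has_bochner_integral_iff)
  also have "(\<Prod>b\<in>Basis. complex_of_real (sqrt (pi/e) * exp (- ((w \<bullet> b)^2) / (4*e))))
      = complex_of_real ((sqrt (pi/e))^DIM('a) * exp (- ((norm w)^2) / (4*e)))"
    by (simp add: prod.distrib norm_sq_eq_sum_Basis[of w] sum_divide_distrib sum_negf[symmetric] exp_sum of_real_prod)
  finally have "has_bochner_integral (Pi\<^sub>M Basis (\<lambda>_. lborel))
      (\<lambda>f. complex_of_real (exp (- e * (norm (T f))^2)) * iexp (T f \<bullet> w))
      (complex_of_real ((sqrt (pi/e))^DIM('a) * exp (- ((norm w)^2) / (4*e))))"
    by (simp only: factorise)
  then have "has_bochner_integral (distr (Pi\<^sub>M Basis (\<lambda>_. lborel)) borel T)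
      (\<lambda>k::'a. complex_of_real (exp (- e * (norm k)^2)) * iexp (k \<bullet> w))
      (complex_of_real ((sqrt (pi/e))^DIM('a) * exp (- ((norm w)^2) / (4*e))))"
    by (intro has_bochner_integral_distr[OF _ T_measurable]) simp_all
  then show ?thesis
    by (simp add: lborel_eq[symmetric] T_def)
qed

lemma has_bochner_integral_gaussian:
  assumes "e > 0"
  shows "has_bochner_integral lborel (\<lambda>k::'a::euclidean_space. exp (- e * (norm k)^2)) ((sqrt (pi/e))^DIM('a))"
  using has_bochner_integral_bounded_linear[OF bounded_linear_Re
      has_bochner_integral_gaussian_iexp[OF assms, of 0]]
  by simp

definition heat_kernel :: "real \<Rightarrow> 'a::euclidean_space \<Rightarrow> real" where
  "heat_kernel t x = (4*pi*t) powr (-(real DIM('a))/2) * exp (- ((norm x)^2) / (4*t))"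

lemma heat_kernel_nonneg[simp]: "0 \<le> heat_kernel t x"
  by (simp add: heat_kernel_def)

lemma borel_measurable_heat_kernel[measurable]: "heat_kernel t \<in> borel_measurable borel"
  unfolding heat_kernel_def[abs_def] by measurable

lemma heat_kernel_minus: "heat_kernel t (- x) = heat_kernel t x"
  by (simp add: heat_kernel_def)

lemma has_bochner_integral_heat_kernel:
  assumes t: "t > 0"
  shows "has_bochner_integral lborel (heat_kernel t :: 'a::euclidean_space \<Rightarrow> real) 1"
proof -
  let ?n = "real DIM('a)"
  have "has_bochner_integral lborel (\<lambda>x::'a. (4*pi*t) powr (-?n/2) * exp (- (1/(4*t)) * (norm x)^2))
      ((4*pi*t) powr (-?n/2) * (sqrt (pi/(1/(4*t))))^DIM('a))"
    using t by (intro has_bochner_integral_mult_right has_bochner_integral_gaussian) simp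
  moreover have "(4*pi*t) powr (-?n/2) * (sqrt (pi/(1/(4*t))))^DIM('a) = 1"
  proof -
    have "pi/(1/(4*t)) = 4*pi*t"
      by simp
    moreover have "(sqrt (4*pi*t))^DIM('a) = (4*pi*t) powr (?n/2)"
      using t by (intro sqrt_power_eq_powr) simp
    ultimately have "(sqrt (pi/(1/(4*t))))^DIM('a) = (4*pi*t) powr (?n/2)"
      by (simp only:)
    moreover have "(4*pi*t) powr (-?n/2) * (4*pi*t) powr (?n/2) = 1"
      using t by (simp add: powr_add[symmetric])
    ultimately show ?thesis by simp
  qed
  ultimately show ?thesis
    by (simp add: heat_kernel_def[abs_def])
qed

lemma integrable_heat_kernel: "t > 0 \<Longrightarrow> integrable lborel (heat_kernel t :: 'a::euclidean_space \<Rightarrow> real)"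
  and integral_heat_kernel: "t > 0 \<Longrightarrow> integral\<^sup>L lborel (heat_kernel t :: 'a::euclidean_space \<Rightarrow> real) = 1"
  using has_bochner_integral_heat_kernel by (auto simp: has_bochner_integral_iff)

lemma nn_integral_heat_kernel:
  "t > 0 \<Longrightarrow> (\<integral>\<^sup>+x. ennreal (heat_kernel t x) \<partial>(lborel :: 'a::euclidean_space measure)) = 1"
  by (simp add: nn_integral_eq_integral integrable_heat_kernel integral_heat_kernel)

lemma has_bochner_integral_heat_kernel_diff:
  fixes x :: "'a::euclidean_space"
  assumes t: "t > 0"
  shows "has_bochner_integral lborel (\<lambda>y. heat_kernel t (x - y)) 1"
proof -
  have shift: "heat_kernel t (x - y) = heat_kernel t (-x + y)" for y
    using heat_kernel_minus[of t "x - y"] by simp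
  show ?thesis
    using integrable_lborel_translate[OF integrable_heat_kernel[OF t], of "-x"]
      integral_lborel_translate[of "heat_kernel t" "-x"] integral_heat_kernel[OF t, where 'a='a]
    by (simp add: has_bochner_integral_iff shift)
qed

lemma has_bochner_integral_gaussian_fourier:
  fixes w :: "'a::euclidean_space"
  assumes e: "e > 0"
  shows "has_bochner_integral lborel (\<lambda>k::'a. complex_of_real (exp (- e * (norm k)^2)) * iexp (k \<bullet> w))
           (complex_of_real ((2*pi)^DIM('a) * heat_kernel e w))"
proof -
  let ?n = "real DIM('a)"
  have "pi/e * (4*pi*e) = (2*pi)^2"
    using e by (simp add: power2_eq_square)
  then have "sqrt (pi/e) * sqrt (4*pi*e) = sqrt ((2*pi)^2)"
    by (simp only: real_sqrt_mult[symmetric])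
  also have "\<dots> = 2*pi"
    by (rule real_sqrt_unique) auto
  finally have "(sqrt (pi/e))^DIM('a) * (sqrt (4*pi*e))^DIM('a) = (2*pi)^DIM('a)"
    by (simp only: power_mult_distrib[symmetric])
  moreover have "(sqrt (4*pi*e))^DIM('a) = (4*pi*e) powr (?n/2)"
    using e by (intro sqrt_power_eq_powr) simp
  ultimately have prod: "(sqrt (pi/e))^DIM('a) * (4*pi*e) powr (?n/2) = (2*pi)^DIM('a)"
    by simp
  have "(sqrt (pi/e))^DIM('a) = (sqrt (pi/e))^DIM('a) * ((4*pi*e) powr (?n/2) * (4*pi*e) powr (-?n/2))"
    using e by (simp add: powr_add[symmetric])
  also have "\<dots> = (2*pi)^DIM('a) * (4*pi*e) powr (-?n/2)"
    by (simp only: mult.assoc[symmetric] prod)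
  finally have "(2*pi)^DIM('a) * heat_kernel e w = (sqrt (pi/e))^DIM('a) * exp (- ((norm w)^2) / (4*e))"
    by (simp only: heat_kernel_def mult.assoc)
  then show ?thesis
    using has_bochner_integral_gaussian_iexp[OF e, of w] by (simp only:)
qed

section \<open>Plancherel's inequality\<close>

definition fourier_transform :: "('a::euclidean_space \<Rightarrow> complex) \<Rightarrow> 'a \<Rightarrow> complex" where
  "fourier_transform h k = complex_of_real ((2*pi) powr (-(real DIM('a))/2)) *
     (\<integral>x. exp (- \<i> * complex_of_real (k \<bullet> x)) * h x \<partial>lborel)"

lemma borel_measurable_fourier_transform[measurable]:
  assumes [measurable]: "h \<in> borel_measurable borel"
  shows "fourier_transform h \<in> borel_measurable borel"
  unfolding fourier_transform_def[abs_def] by measurable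

lemma integrable_fourier_integrand:
  assumes "integrable lborel h"
  shows "integrable lborel (\<lambda>x. exp (- \<i> * complex_of_real (k \<bullet> x)) * h x)"
proof -
  have [measurable]: "h \<in> borel_measurable borel"
    using assms by auto
  show ?thesis
    using assms by (rule Bochner_Integration.integrable_bound[OF integrable_norm]) (auto simp: norm_mult)
qed

lemma norm_fourier_transform_le:
  "norm (fourier_transform h k) \<le> (2*pi) powr (-(real DIM('a))/2) * (\<integral>x. norm (h x) \<partial>lborel)"
  for h :: "'a::euclidean_space \<Rightarrow> complex"
proof -
  have "norm (\<integral>x. exp (- \<i> * complex_of_real (k \<bullet> x)) * h x \<partial>lborel) \<le> (\<integral>x. norm (h x) \<partial>lborel)"
    by (rule order_trans[OF integral_norm_bound]) (simp add: norm_mult)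
  then show ?thesis
    by (simp add: fourier_transform_def norm_mult mult_left_mono)
qed

lemma fourier_transform_diff:
  assumes "integrable lborel a" and "integrable lborel b"
  shows "fourier_transform (\<lambda>x. a x - b x) k = fourier_transform a k - fourier_transform b k"
  using Bochner_Integration.integral_diff[OF integrable_fourier_integrand[OF assms(1)] integrable_fourier_integrand[OF assms(2)]]
  by (simp add: fourier_transform_def right_diff_distrib)

lemma fourier_transform_translate:
  fixes g :: "'a::euclidean_space \<Rightarrow> complex"
  assumes [measurable]: "g \<in> borel_measurable borel"
  shows "fourier_transform (\<lambda>x. g (x + z)) k = iexp (k \<bullet> z) * fourier_transform g k"
proof -
  let ?G = "\<lambda>x. exp (- \<i> * complex_of_real (k \<bullet> x)) * g (x + z)"
  have "(\<integral>x. ?G x \<partial>lborel) = (\<integral>y. ?G (-z + y) \<partial>lborel)"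
    by (rule integral_lborel_translate[symmetric]) measurable
  also have "\<dots> = (\<integral>y. iexp (k \<bullet> z) * (exp (- \<i> * complex_of_real (k \<bullet> y)) * g y) \<partial>lborel)"
    by (intro Bochner_Integration.integral_cong) (simp_all add: exp_add[symmetric] inner_add_right algebra_simps)
  finally show ?thesis
    by (simp add: fourier_transform_def)
qed

lemma fourier_normalisation: "((2*pi) powr (-(real n)/2))^2 = inverse ((2*pi)^n)"
proof -
  have "((2*pi) powr (-(real n)/2))^2 = (2*pi) powr (-(real n)/2 + -(real n)/2)"
    by (simp only: power2_eq_square powr_add)
  also have "\<dots> = inverse ((2*pi) powr (real n))"
    by (simp add: powr_minus)
  finally show ?thesis
    by (simp add: powr_realpow)
qed

lemma norm_fourier_transform_sq:
  fixes h :: "'a::euclidean_space \<Rightarrow> complex"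
  assumes h: "integrable lborel h"
  shows "complex_of_real ((cmod (fourier_transform h k))^2) = complex_of_real (inverse ((2*pi)^DIM('a))) *
           (\<integral>p. iexp (k \<bullet> (snd p - fst p)) * (h (fst p) * cnj (h (snd p))) \<partial>(lborel \<Otimes>\<^sub>M lborel))"
proof -
  have [measurable]: "h \<in> borel_measurable borel" using h by auto
  let ?a = "\<lambda>x. exp (- \<i> * complex_of_real (k \<bullet> x)) * h x"
  let ?c = "(2*pi) powr (-(real DIM('a))/2)"
  have ia: "integrable lborel ?a"
    using h by (rule integrable_fourier_integrand)
  have "complex_of_real ((cmod (fourier_transform h k))^2) = fourier_transform h k * cnj (fourier_transform h k)"
    by (simp add: complex_mult_cnj cmod_power2)
  also have "\<dots> = complex_of_real (?c^2) * (integral\<^sup>L lborel ?a * cnj (integral\<^sup>L lborel ?a))"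
    by (simp add: fourier_transform_def power2_eq_square)
  also have "cnj (integral\<^sup>L lborel ?a) = integral\<^sup>L lborel (\<lambda>y. cnj (?a y))"
    by (rule Bochner_Integration.integral_cnj[symmetric])
  also have "integral\<^sup>L lborel ?a * integral\<^sup>L lborel (\<lambda>y. cnj (?a y))
      = (\<integral>p. ?a (fst p) * cnj (?a (snd p)) \<partial>(lborel \<Otimes>\<^sub>M lborel))"
    by (rule lborel_pair.integral_product_mult[symmetric, OF ia integrable_cnj[OF ia]])
  also have "\<dots> = (\<integral>p. iexp (k \<bullet> (snd p - fst p)) * (h (fst p) * cnj (h (snd p))) \<partial>(lborel \<Otimes>\<^sub>M lborel))"
    by (intro Bochner_Integration.integral_cong)
       (simp_all add: exp_cnj exp_add[symmetric] inner_diff_right algebra_simps)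
  finally show ?thesis
    by (simp only: fourier_normalisation)
qed

text \<open>The Gaussian damping makes the double integral absolutely convergent, so Fubini applies;
  integrating out k then turns the Gaussian into a heat kernel.\<close>
lemma integral_gaussian_weighted_fourier:
  fixes h :: "'a::euclidean_space \<Rightarrow> complex"
  assumes h: "integrable lborel h" and e: "e > 0"
  shows "(\<integral>k. complex_of_real (exp (- e * (norm k)^2) * (cmod (fourier_transform h k))^2) \<partial>lborel)
       = (\<integral>p. h (fst p) * cnj (h (snd p)) * complex_of_real (heat_kernel e (fst p - snd p)) \<partial>(lborel \<Otimes>\<^sub>M lborel))"
proof -
  interpret Q: pair_sigma_finite "lborel :: 'a measure" "lborel \<Otimes>\<^sub>M lborel :: ('a\<times>'a) measure" ..
  have [measurable]: "h \<in> borel_measurable borel" using h by auto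
  let ?E = "\<lambda>k::'a. exp (- e * (norm k)^2)"
  let ?\<Psi> = "\<lambda>p::'a\<times>'a. h (fst p) * cnj (h (snd p))"
  let ?\<Phi> = "\<lambda>(k::'a) (p::'a\<times>'a). complex_of_real (?E k) * iexp (k \<bullet> (snd p - fst p)) * ?\<Psi> p"
  let ?C = "complex_of_real (inverse ((2*pi)^DIM('a)))"
  have gaussian: "has_bochner_integral lborel (\<lambda>k. complex_of_real (?E k) * iexp (k \<bullet> (snd p - fst p)))
      (complex_of_real ((2*pi)^DIM('a) * heat_kernel e (fst p - snd p)))" for p
    using has_bochner_integral_gaussian_fourier[OF e, of "snd p - fst p"]
    by (simp add: heat_kernel_minus[of e "fst p - snd p", symmetric])
  have iE: "integrable lborel ?E"
    using has_bochner_integral_gaussian[OF e, where 'a='a] by (simp add: has_bochner_integral_iff)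
  have "integrable (lborel \<Otimes>\<^sub>M lborel) (\<lambda>p::'a\<times>'a. norm (h (fst p)) * norm (h (snd p)))"
    using h by (intro lborel_pair.integrable_product_mult) auto
  then have "integrable (lborel \<Otimes>\<^sub>M (lborel \<Otimes>\<^sub>M lborel))
      (\<lambda>q::'a\<times>('a\<times>'a). ?E (fst q) * (norm (h (fst (snd q))) * norm (h (snd (snd q)))))"
    by (rule Q.integrable_product_mult[OF iE])
  then have i\<Phi>: "integrable (lborel \<Otimes>\<^sub>M (lborel \<Otimes>\<^sub>M lborel)) (case_prod ?\<Phi>)"
    by (rule Bochner_Integration.integrable_bound) (auto simp: norm_mult)
  have "(\<integral>k. complex_of_real (?E k * (cmod (fourier_transform h k))^2) \<partial>lborel)
      = (\<integral>k. ?C * (\<integral>p. ?\<Phi> k p \<partial>(lborel \<Otimes>\<^sub>M lborel)) \<partial>lborel)"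
  proof (rule Bochner_Integration.integral_cong[OF refl])
    fix k
    have "(\<integral>p. ?\<Phi> k p \<partial>(lborel \<Otimes>\<^sub>M lborel))
        = complex_of_real (?E k) * (\<integral>p. iexp (k \<bullet> (snd p - fst p)) * ?\<Psi> p \<partial>(lborel \<Otimes>\<^sub>M lborel))"
      by (simp only: mult.assoc integral_mult_right_zero)
    then show "complex_of_real (?E k * (cmod (fourier_transform h k))^2)
        = ?C * (\<integral>p. ?\<Phi> k p \<partial>(lborel \<Otimes>\<^sub>M lborel))"
      by (simp only: of_real_mult norm_fourier_transform_sq[OF h] ac_simps)
  qed
  also have "\<dots> = ?C * (\<integral>p. (\<integral>k. ?\<Phi> k p \<partial>lborel) \<partial>(lborel \<Otimes>\<^sub>M lborel))"
    by (simp only: integral_mult_right_zero Q.Fubini_integral[OF i\<Phi>])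
  also have "\<dots> = ?C * (\<integral>p. ?\<Psi> p * complex_of_real ((2*pi)^DIM('a) * heat_kernel e (fst p - snd p)) \<partial>(lborel \<Otimes>\<^sub>M lborel))"
    using gaussian by (simp add: has_bochner_integral_iff mult.commute[of _ "?\<Psi> _"])
  also have "\<dots> = (\<integral>p. ?\<Psi> p * complex_of_real (heat_kernel e (fst p - snd p)) \<partial>(lborel \<Otimes>\<^sub>M lborel))"
    by (simp flip: integral_mult_right_zero add: field_simps)
  finally show ?thesis .
qed

lemma ennreal_mult_le_half_squares:
  fixes u v k :: real
  assumes k: "0 \<le> k"
  shows "ennreal (u * v * k) \<le> ennreal (1/2) * ennreal (u^2 * k) + ennreal (1/2) * ennreal (v^2 * k)"
proof -
  have "0 \<le> (u - v)^2 * k"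
    using k by simp
  then have "u * v * k \<le> 1/2 * (u^2 * k) + 1/2 * (v^2 * k)"
    by (simp add: power2_diff algebra_simps)
  then have "ennreal (u * v * k) \<le> ennreal (1/2 * (u^2 * k) + 1/2 * (v^2 * k))"
    by (rule ennreal_leI)
  also have "\<dots> = ennreal (1/2) * ennreal (u^2 * k) + ennreal (1/2) * ennreal (v^2 * k)"
    using k ennreal_plus[of "1/2 * (u^2 * k)" "1/2 * (v^2 * k)"]
      ennreal_mult[of "1/2" "u^2 * k"] ennreal_mult[of "1/2" "v^2 * k"]
    by simp
  finally show ?thesis .
qed

lemma nn_integral_even_kernel_quadratic_le:
  fixes a K :: "'a::euclidean_space \<Rightarrow> real"
  assumes [measurable]: "a \<in> borel_measurable borel" "K \<in> borel_measurable borel"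
    and K_nonneg: "\<And>w. 0 \<le> K w" and K_even: "\<And>w. K (- w) = K w"
  shows "(\<integral>\<^sup>+p. ennreal (a (fst p) * a (snd p) * K (fst p - snd p)) \<partial>(lborel \<Otimes>\<^sub>M lborel))
      \<le> (\<integral>\<^sup>+w. ennreal (K w) \<partial>lborel) * (\<integral>\<^sup>+x. ennreal ((a x)^2) \<partial>lborel)"
proof -
  let ?I = "\<integral>\<^sup>+w. ennreal (K w) \<partial>lborel"
  let ?N = "\<integral>\<^sup>+x. ennreal ((a x)^2) \<partial>lborel"
  let ?A = "\<lambda>p::'a\<times>'a. ennreal ((a (fst p))^2 * K (fst p - snd p))"
  let ?B = "\<lambda>p::'a\<times>'a. ennreal ((a (snd p))^2 * K (fst p - snd p))"
  have row: "(\<integral>\<^sup>+y. ennreal (K (x - y)) \<partial>lborel) = ?I" for x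
    using nn_integral_lborel_translate[of "\<lambda>w. ennreal (K w)" "-x"] K_even[of "x - _"] by simp
  have col: "(\<integral>\<^sup>+x. ennreal (K (x - y)) \<partial>lborel) = ?I" for y
    using nn_integral_lborel_translate[of "\<lambda>w. ennreal (K w)" "-y"] by simp
  have "(\<integral>\<^sup>+p. ennreal (a (fst p) * a (snd p) * K (fst p - snd p)) \<partial>(lborel \<Otimes>\<^sub>M lborel))
      \<le> (\<integral>\<^sup>+p. ennreal (1/2) * ?A p + ennreal (1/2) * ?B p \<partial>(lborel \<Otimes>\<^sub>M lborel))"
    using K_nonneg by (intro nn_integral_mono ennreal_mult_le_half_squares)
  also have "\<dots> = ennreal (1/2) * integral\<^sup>N (lborel \<Otimes>\<^sub>M lborel) ?A + ennreal (1/2) * integral\<^sup>N (lborel \<Otimes>\<^sub>M lborel) ?B"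
    by (subst nn_integral_add) (auto simp: nn_integral_cmult)
  also have "integral\<^sup>N (lborel \<Otimes>\<^sub>M lborel) ?A = ?I * ?N"
  proof -
    have "integral\<^sup>N (lborel \<Otimes>\<^sub>M lborel) ?A = (\<integral>\<^sup>+x. ennreal ((a x)^2) * (\<integral>\<^sup>+y. ennreal (K (x - y)) \<partial>lborel) \<partial>lborel)"
      by (subst lborel.nn_integral_fst[symmetric])
         (auto simp: K_nonneg ennreal_mult nn_integral_cmult)
    also have "\<dots> = ?N * ?I"
      by (simp only: row) (rule nn_integral_multc, measurable)
    finally show ?thesis
      by (simp only: mult.commute)
  qed
  also have "integral\<^sup>N (lborel \<Otimes>\<^sub>M lborel) ?B = ?I * ?N"
  proof -
    have "integral\<^sup>N (lborel \<Otimes>\<^sub>M lborel) ?B = (\<integral>\<^sup>+y. ennreal ((a y)^2) * (\<integral>\<^sup>+x. ennreal (K (x - y)) \<partial>lborel) \<partial>lborel)"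
      by (subst lborel_pair.nn_integral_snd[symmetric])
         (auto simp: K_nonneg ennreal_mult nn_integral_cmult)
    also have "\<dots> = ?N * ?I"
      by (simp only: col) (rule nn_integral_multc, measurable)
    finally show ?thesis
      by (simp only: mult.commute)
  qed
  also have "ennreal (1/2) * (?I * ?N) + ennreal (1/2) * (?I * ?N) = (ennreal (1/2) + ennreal (1/2)) * (?I * ?N)"
    by (simp only: distrib_right)
  also have "ennreal (1/2) + ennreal (1/2) = 1"
    using ennreal_plus[of "1/2" "1/2"] by simp
  finally show ?thesis
    by simp
qed

lemma integrable_gaussian_weighted_fourier:
  fixes h :: "'a::euclidean_space \<Rightarrow> complex"
  assumes h: "integrable lborel h" and e: "e > 0"
  shows "integrable lborel (\<lambda>k. exp (- e * (norm k)^2) * (cmod (fourier_transform h k))^2)"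
proof (rule Bochner_Integration.integrable_bound)
  have [measurable]: "h \<in> borel_measurable borel" using h by auto
  let ?E = "\<lambda>k::'a. exp (- e * (norm k)^2)"
  let ?L = "(2*pi) powr (-(real DIM('a))/2) * (\<integral>x. norm (h x) \<partial>lborel)"
  show "integrable lborel (\<lambda>k. ?E k * ?L^2)"
    using has_bochner_integral_gaussian[OF e, where 'a='a] by (simp add: has_bochner_integral_iff)
  show "(\<lambda>k. ?E k * (cmod (fourier_transform h k))^2) \<in> borel_measurable lborel"
    by measurable
  show "AE k in lborel. norm (?E k * (cmod (fourier_transform h k))^2) \<le> norm (?E k * ?L^2)"
  proof (rule AE_I2)
    fix k
    have "(cmod (fourier_transform h k))^2 \<le> ?L^2"
      by (rule power_mono[OF norm_fourier_transform_le]) simp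
    then have "?E k * (cmod (fourier_transform h k))^2 \<le> ?E k * ?L^2"
      by (rule mult_left_mono) simp
    then show "norm (?E k * (cmod (fourier_transform h k))^2) \<le> norm (?E k * ?L^2)"
      by simp
  qed
qed

lemma nn_integral_gaussian_weighted_fourier_le:
  fixes h :: "'a::euclidean_space \<Rightarrow> complex"
  assumes h: "integrable lborel h" and e: "e > 0"
  shows "(\<integral>\<^sup>+k. ennreal (exp (- e * (norm k)^2) * (cmod (fourier_transform h k))^2) \<partial>lborel)
      \<le> (\<integral>\<^sup>+x. ennreal ((cmod (h x))^2) \<partial>lborel)"
proof -
  have [measurable]: "h \<in> borel_measurable borel" using h by auto
  let ?E = "\<lambda>k::'a. exp (- e * (norm k)^2)"
  have iA: "integrable lborel (\<lambda>k. ?E k * (cmod (fourier_transform h k))^2)"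
    by (rule integrable_gaussian_weighted_fourier[OF h e])
  have "(\<integral>\<^sup>+k. ennreal (?E k * (cmod (fourier_transform h k))^2) \<partial>lborel)
      = ennreal (norm (complex_of_real (\<integral>k. ?E k * (cmod (fourier_transform h k))^2 \<partial>lborel)))"
    using iA by (simp add: nn_integral_eq_integral integral_nonneg)
  also have "complex_of_real (\<integral>k. ?E k * (cmod (fourier_transform h k))^2 \<partial>lborel)
      = (\<integral>k. complex_of_real (?E k * (cmod (fourier_transform h k))^2) \<partial>lborel)"
    by (rule integral_complex_of_real[symmetric])
  also have "\<dots> = (\<integral>p. h (fst p) * cnj (h (snd p)) * complex_of_real (heat_kernel e (fst p - snd p)) \<partial>(lborel \<Otimes>\<^sub>M lborel))"
    by (rule integral_gaussian_weighted_fourier[OF h e])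
  also have "ennreal (norm \<dots>) \<le> (\<integral>\<^sup>+p. norm (h (fst p) * cnj (h (snd p)) * complex_of_real (heat_kernel e (fst p - snd p))) \<partial>(lborel \<Otimes>\<^sub>M lborel))"
    by (rule norm_integral_le_nn_integral)
  also have "\<dots> = (\<integral>\<^sup>+p. ennreal (cmod (h (fst p)) * cmod (h (snd p)) * heat_kernel e (fst p - snd p)) \<partial>(lborel \<Otimes>\<^sub>M lborel))"
    by (simp add: norm_mult)
  also have "\<dots> \<le> (\<integral>\<^sup>+w. ennreal (heat_kernel e w) \<partial>(lborel :: 'a measure)) * (\<integral>\<^sup>+x. ennreal ((cmod (h x))^2) \<partial>lborel)"
    by (rule nn_integral_even_kernel_quadratic_le) (simp_all add: heat_kernel_minus)
  finally show ?thesis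
    by (simp add: nn_integral_heat_kernel[OF e])
qed

lemma nn_integral_fourier_transform_le:
  fixes h :: "'a::euclidean_space \<Rightarrow> complex"
  assumes h: "integrable lborel h"
  shows "(\<integral>\<^sup>+k. ennreal ((cmod (fourier_transform h k))^2) \<partial>lborel) \<le> (\<integral>\<^sup>+x. ennreal ((cmod (h x))^2) \<partial>lborel)"
proof -
  have [measurable]: "h \<in> borel_measurable borel" using h by auto
  define u where "u j k = ennreal (exp (- inverse (real (Suc j)) * (norm k)^2) * (cmod (fourier_transform h k))^2)"
    for j and k :: 'a
  have "(\<lambda>j. u j k) \<longlonglongrightarrow> ennreal ((cmod (fourier_transform h k))^2)" for k
  proof -
    have "(\<lambda>j. exp (- inverse (real (Suc j)) * (norm k)^2) * (cmod (fourier_transform h k))^2)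
        \<longlonglongrightarrow> exp (- 0 * (norm k)^2) * (cmod (fourier_transform h k))^2"
      by (intro tendsto_intros LIMSEQ_inverse_real_of_nat)
    then show ?thesis
      unfolding u_def by (intro tendsto_ennrealI) simp
  qed
  then have "liminf (\<lambda>j. u j k) = ennreal ((cmod (fourier_transform h k))^2)" for k
    by (intro lim_imp_Liminf) simp_all
  then have "(\<integral>\<^sup>+k. ennreal ((cmod (fourier_transform h k))^2) \<partial>lborel) = (\<integral>\<^sup>+k. liminf (\<lambda>j. u j k) \<partial>lborel)"
    by simp
  also have "\<dots> \<le> liminf (\<lambda>j. integral\<^sup>N lborel (u j))"
    by (rule nn_integral_liminf) (simp add: u_def)
  also have "\<dots> \<le> limsup (\<lambda>j. integral\<^sup>N lborel (u j))"
    by (rule Liminf_le_Limsup) simp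
  also have "\<dots> \<le> (\<integral>\<^sup>+x. ennreal ((cmod (h x))^2) \<partial>lborel)"
    unfolding u_def
    by (intro Limsup_bounded always_eventually allI nn_integral_gaussian_weighted_fourier_le h) simp
  finally show ?thesis .
qed

section \<open>Translations and the form domain of the Laplacian\<close>

lemma L2_D:
  assumes "f \<in> L2"
  shows "f \<in> borel_measurable borel" "integrable lborel (\<lambda>x. (cmod (f x))^2)"
  using assms by (auto simp: L2_def)

lemma nn_integral_L2_finite:
  "f \<in> L2 \<Longrightarrow> (\<integral>\<^sup>+x. ennreal ((cmod (f x))^2) \<partial>lborel) < \<infinity>"
  by (simp add: L2_def nn_integral_eq_integral)

lemma L2_translate:
  assumes f: "f \<in> L2"
  shows "(\<lambda>x. f (x + w)) \<in> L2"
proof -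
  have [measurable]: "f \<in> borel_measurable borel"
    using L2_D[OF f] by auto
  have "(\<integral>\<^sup>+x. ennreal ((cmod (f (x + w)))^2) \<partial>lborel) < \<infinity>"
    using nn_integral_L2_finite[OF f] nn_integral_lborel_translate[of "\<lambda>x. ennreal ((cmod (f x))^2)" w]
    by (simp add: add.commute)
  then show ?thesis
    by (auto simp: L2_def less_top intro!: integrableI_nonneg)
qed

lemma integrable_indicator_L2:
  fixes f :: "'a::euclidean_space \<Rightarrow> complex"
  assumes f: "f \<in> L2" and A: "bounded A" "A \<in> sets borel"
  shows "integrable lborel (\<lambda>x. indicator A x *\<^sub>R f x)"
proof (rule Bochner_Integration.integrable_bound)
  have [measurable]: "f \<in> borel_measurable borel" "A \<in> sets borel"
    using L2_D[OF f] A by auto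
  show "integrable lborel (\<lambda>x. indicator A x + (cmod (f x))^2)"
    using L2_D(2)[OF f] emeasure_bounded_finite[OF A(1)] A(2)
    by (intro Bochner_Integration.integrable_add) auto
  show "(\<lambda>x. indicator A x *\<^sub>R f x) \<in> borel_measurable lborel"
    by measurable
  have "cmod (f x) \<le> 1 + (cmod (f x))^2" for x
  proof (cases "cmod (f x) \<le> 1")
    case False
    then have "cmod (f x) \<le> cmod (f x) * cmod (f x)"
      by (simp add: mult_le_cancel_left1)
    then show ?thesis
      by (simp add: power2_eq_square)
  qed (simp add: add_increasing2)
  then show "AE x in lborel. norm (indicator A x *\<^sub>R f x) \<le> norm (indicator A x + (cmod (f x))^2)"
    by (intro AE_I2) (auto simp: indicator_def)
qed

lemma sets_borel_ball[measurable]: "ball c r \<in> sets borel"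
  by simp

lemma trunc_fourier_eq: "trunc_fourier R f = fourier_transform (\<lambda>x. indicator (ball 0 R) x *\<^sub>R f x)"
  unfolding trunc_fourier_def fourier_transform_def set_lebesgue_integral_def
  by (intro ext arg_cong[where f = "\<lambda>I. _ * I"] Bochner_Integration.integral_cong) (auto simp: indicator_def)

lemma tendsto_nn_integral_tail:
  assumes f: "f \<in> L2"
  shows "((\<lambda>R. \<integral>\<^sup>+x. ennreal (indicator {x. R \<le> norm x} x * (cmod (f x))^2) \<partial>lborel) \<longlongrightarrow> 0) at_top"
proof -
  have [measurable]: "f \<in> borel_measurable borel" and f2: "integrable lborel (\<lambda>x. (cmod (f x))^2)"
    using L2_D[OF f] by auto
  let ?s = "\<lambda>R x. indicator {x. R \<le> norm x} x * (cmod (f x))^2"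
  have s_measurable: "?s R \<in> borel_measurable lborel" for R
    by measurable
  have pointwise: "AE x in lborel. ((\<lambda>R. ?s R x) \<longlongrightarrow> 0) at_top"
  proof (rule AE_I2)
    fix x :: 'a
    have "eventually (\<lambda>R. ?s R x = 0) at_top"
      using eventually_gt_at_top[of "norm x"] by eventually_elim (auto simp: indicator_def)
    then show "((\<lambda>R. ?s R x) \<longlongrightarrow> 0) at_top"
      by (rule tendsto_eventually)
  qed
  moreover have dominated: "\<forall>\<^sub>F R in at_top. AE x in lborel. norm (?s R x) \<le> (cmod (f x))^2"
    by (intro always_eventually allI AE_I2) (auto simp: indicator_def)
  have "((\<lambda>R. integral\<^sup>L lborel (?s R)) \<longlongrightarrow> 0) at_top"
    using integral_dominated_convergence_at_top[OF borel_measurable_const[where c = "0::real"]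
        s_measurable f2 pointwise dominated]
    by simp
  moreover have "integrable lborel (?s R)" for R
    by (rule Bochner_Integration.integrable_bound[OF f2]) (auto simp: indicator_def)
  ultimately show ?thesis
    by (simp add: nn_integral_eq_integral tendsto_ennrealI[where x = 0, simplified])
qed

lemma nn_integral_fourier_transform_ball_diff_le:
  fixes f :: "'a::euclidean_space \<Rightarrow> complex"
  assumes f: "f \<in> L2"
  shows "(\<integral>\<^sup>+k. ennreal ((cmod (fourier_transform (\<lambda>x. indicator (ball z R) x *\<^sub>R f x) k
                                 - fourier_transform (\<lambda>x. indicator (ball 0 R) x *\<^sub>R f x) k))^2) \<partial>lborel)
      \<le> (\<integral>\<^sup>+x. ennreal (indicator {x. R - norm z \<le> norm x} x * (cmod (f x))^2) \<partial>lborel)"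
proof -
  have [measurable]: "f \<in> borel_measurable borel"
    using L2_D[OF f] by auto
  let ?d = "\<lambda>x. indicator (ball z R) x *\<^sub>R f x - indicator (ball 0 R) x *\<^sub>R f x"
  have iz: "integrable lborel (\<lambda>x. indicator (ball z R) x *\<^sub>R f x)"
    and i0: "integrable lborel (\<lambda>x. indicator (ball 0 R) x *\<^sub>R f x)"
    by (auto intro!: integrable_indicator_L2[OF f])
  have support: "(cmod (?d x))^2 \<le> indicator {x. R - norm z \<le> norm x} x * (cmod (f x))^2" for x
  proof (cases "(x \<in> ball z R) = (x \<in> ball 0 R)")
    case False
    then consider "R \<le> norm x" | "R \<le> norm (z - x)"
      by (auto simp: dist_norm)
    then have "R - norm z \<le> norm x"
      using norm_triangle_ineq4[of z x] norm_ge_zero[of z] by cases linarith+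
    then show ?thesis
      by (auto simp: indicator_def)
  qed (auto simp: indicator_def)
  have "(\<integral>\<^sup>+k. ennreal ((cmod (fourier_transform (\<lambda>x. indicator (ball z R) x *\<^sub>R f x) k
                                 - fourier_transform (\<lambda>x. indicator (ball 0 R) x *\<^sub>R f x) k))^2) \<partial>lborel)
      = (\<integral>\<^sup>+k. ennreal ((cmod (fourier_transform ?d k))^2) \<partial>lborel)"
    by (simp only: fourier_transform_diff[OF iz i0])
  also have "\<dots> \<le> (\<integral>\<^sup>+x. ennreal ((cmod (?d x))^2) \<partial>lborel)"
    using iz i0 by (intro nn_integral_fourier_transform_le) auto
  also have "\<dots> \<le> (\<integral>\<^sup>+x. ennreal (indicator {x. R - norm z \<le> norm x} x * (cmod (f x))^2) \<partial>lborel)"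
    by (intro nn_integral_mono ennreal_leI support)
  finally show ?thesis .
qed

lemma trunc_fourier_translate:
  fixes f :: "'a::euclidean_space \<Rightarrow> complex"
  assumes [measurable]: "f \<in> borel_measurable borel"
  shows "trunc_fourier R (\<lambda>x. f (x + z)) k
    = iexp (k \<bullet> z) * fourier_transform (\<lambda>x. indicator (ball z R) x *\<^sub>R f x) k"
proof -
  have "(\<lambda>x. indicator (ball 0 R) x *\<^sub>R f (x + z)) = (\<lambda>x. indicator (ball z R) (x + z) *\<^sub>R f (x + z))"
    by (auto simp: indicator_def dist_norm)
  moreover have "(\<lambda>y. indicator (ball z R) y *\<^sub>R f y) \<in> borel_measurable borel"
    by measurable
  from fourier_transform_translate[OF this, of z k] show ?thesis
    by (simp add: trunc_fourier_eq calculation)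
qed

lemma nn_integral_trunc_fourier_translate_le:
  fixes f g :: "'a::euclidean_space \<Rightarrow> complex"
  assumes f: "f \<in> L2" and [measurable]: "g \<in> borel_measurable borel"
  shows "(\<integral>\<^sup>+k. ennreal ((cmod (iexp (k \<bullet> z) * g k - trunc_fourier R (\<lambda>x. f (x + z)) k))^2) \<partial>lborel)
      \<le> 2 * (\<integral>\<^sup>+k. ennreal ((cmod (g k - trunc_fourier R f k))^2) \<partial>lborel)
        + 2 * (\<integral>\<^sup>+x. ennreal (indicator {x. R - norm z \<le> norm x} x * (cmod (f x))^2) \<partial>lborel)"
proof -
  have [measurable]: "f \<in> borel_measurable borel"
    using L2_D[OF f] by auto
  have [measurable]: "trunc_fourier R f \<in> borel_measurable borel"
    unfolding trunc_fourier_eq by measurable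
  let ?A = "fourier_transform (\<lambda>x. indicator (ball z R) x *\<^sub>R f x)"
  have "(\<integral>\<^sup>+k. ennreal ((cmod (iexp (k \<bullet> z) * g k - trunc_fourier R (\<lambda>x. f (x + z)) k))^2) \<partial>lborel)
      = (\<integral>\<^sup>+k. ennreal ((cmod ((g k - trunc_fourier R f k) + (trunc_fourier R f k - ?A k)))^2) \<partial>lborel)"
    by (simp add: trunc_fourier_translate norm_mult flip: right_diff_distrib)
  also have "\<dots> \<le> (\<integral>\<^sup>+k. 2 * ennreal ((cmod (g k - trunc_fourier R f k))^2)
                      + 2 * ennreal ((cmod (trunc_fourier R f k - ?A k))^2) \<partial>lborel)"
    by (intro nn_integral_mono ennreal_power2_norm_add_le)
  also have "\<dots> = 2 * (\<integral>\<^sup>+k. ennreal ((cmod (g k - trunc_fourier R f k))^2) \<partial>lborel)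
                 + 2 * (\<integral>\<^sup>+k. ennreal ((cmod (trunc_fourier R f k - ?A k))^2) \<partial>lborel)"
    by (subst nn_integral_add) (auto simp: nn_integral_cmult)
  also have "(\<integral>\<^sup>+k. ennreal ((cmod (trunc_fourier R f k - ?A k))^2) \<partial>lborel)
      \<le> (\<integral>\<^sup>+x. ennreal (indicator {x. R - norm z \<le> norm x} x * (cmod (f x))^2) \<partial>lborel)"
    using nn_integral_fourier_transform_ball_diff_le[OF f, of z R]
    by (simp add: trunc_fourier_eq norm_minus_commute)
  finally show ?thesis
    by (simp add: add_left_mono mult_left_mono)
qed

lemma fourier_plancherel_translate:
  fixes f g :: "'a::euclidean_space \<Rightarrow> complex"
  assumes f: "f \<in> L2" and fg: "fourier_plancherel f g"
  shows "fourier_plancherel (\<lambda>x. f (x + z)) (\<lambda>k. iexp (k \<bullet> z) * g k)"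
proof -
  from fg have g: "g \<in> L2"
    and conv: "((\<lambda>R. \<integral>\<^sup>+k. ennreal ((cmod (g k - trunc_fourier R f k))^2) \<partial>lborel) \<longlongrightarrow> 0) at_top"
    by (auto simp: fourier_plancherel_def)
  have [measurable]: "g \<in> borel_measurable borel"
    using L2_D[OF g] by auto
  let ?tail = "\<lambda>R. \<integral>\<^sup>+x. ennreal (indicator {x. R \<le> norm x} x * (cmod (f x))^2) \<partial>lborel"
  have "filterlim (\<lambda>R::real. R - norm z) at_top at_top"
    by (rule filterlim_tendsto_add_at_top[OF tendsto_const filterlim_ident, of "- norm z", simplified])
  then have "((\<lambda>R. ?tail (R - norm z)) \<longlongrightarrow> 0) at_top"
    using filterlim_compose[OF tendsto_nn_integral_tail[OF f]] by blast
  with conv have "((\<lambda>R. 2 * (\<integral>\<^sup>+k. ennreal ((cmod (g k - trunc_fourier R f k))^2) \<partial>lborel)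
      + 2 * ?tail (R - norm z)) \<longlongrightarrow> 2 * 0 + 2 * 0) at_top"
    by (intro tendsto_add ennreal_tendsto_cmult) auto
  then have majorant: "((\<lambda>R. 2 * (\<integral>\<^sup>+k. ennreal ((cmod (g k - trunc_fourier R f k))^2) \<partial>lborel)
      + 2 * ?tail (R - norm z)) \<longlongrightarrow> 0) at_top"
    by simp
  have "((\<lambda>R. \<integral>\<^sup>+k. ennreal ((cmod (iexp (k \<bullet> z) * g k - trunc_fourier R (\<lambda>x. f (x + z)) k))^2) \<partial>lborel) \<longlongrightarrow> 0) at_top"
    by (intro tendsto_sandwich[OF _ _ tendsto_const majorant] always_eventually allI
        nn_integral_trunc_fourier_translate_le[OF f]) simp_all
  moreover have "(\<lambda>k. iexp (k \<bullet> z) * g k) \<in> L2"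
    using g by (simp add: L2_def norm_mult)
  ultimately show ?thesis
    by (simp add: fourier_plancherel_def)
qed

lemma dom_sqrt_abs_laplacian_translate:
  assumes "f \<in> dom_sqrt_abs_laplacian"
  shows "(\<lambda>x. f (x + w)) \<in> dom_sqrt_abs_laplacian"
  using assms fourier_plancherel_translate[of f _ w] L2_translate[of f w]
  by (fastforce simp: dom_sqrt_abs_laplacian_def norm_mult)

text \<open>Translates of f have the same kinetic energy and L^2 norm, so the form bound with
  \<epsilon> = 1 is uniform in the translation.\<close>
lemma inf_form_bounded_laplacian_translate_bound:
  fixes W :: "'a::euclidean_space \<Rightarrow> real"
  assumes W: "inf_form_bounded_laplacian W" and f: "f \<in> dom_sqrt_abs_laplacian"
  shows "\<exists>M<\<infinity>. \<forall>w. (\<integral>\<^sup>+x. ennreal (W x * (cmod (f (x + w)))^2) \<partial>lborel) \<le> M"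
proof -
  obtain g where fL2: "f \<in> L2" and fg: "fourier_plancherel f g"
    and kinetic: "(\<integral>\<^sup>+k. ennreal ((norm k)^2 * (cmod (g k))^2) \<partial>lborel) < \<infinity>"
    using f by (auto simp: dom_sqrt_abs_laplacian_def)
  have [measurable]: "f \<in> borel_measurable borel"
    using L2_D[OF fL2] by auto
  obtain C where C: "\<forall>f\<in>dom_sqrt_abs_laplacian. \<forall>g. fourier_plancherel f g \<longrightarrow>
        (\<integral>\<^sup>+x. ennreal (W x * (cmod (f x))^2) \<partial>lborel)
          \<le> ennreal 1 * (\<integral>\<^sup>+k. ennreal ((norm k)^2 * (cmod (g k))^2) \<partial>lborel)
            + ennreal C * (\<integral>\<^sup>+x. ennreal ((cmod (f x))^2) \<partial>lborel)"
    using W unfolding inf_form_bounded_laplacian_def by (meson zero_less_one)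
  define M where "M = (\<integral>\<^sup>+k. ennreal ((norm k)^2 * (cmod (g k))^2) \<partial>lborel)
      + ennreal C * (\<integral>\<^sup>+x. ennreal ((cmod (f x))^2) \<partial>lborel)"
  have "(\<integral>\<^sup>+x. ennreal (W x * (cmod (f (x + w)))^2) \<partial>lborel) \<le> M" for w
  proof -
    have "(\<integral>\<^sup>+x. ennreal (W x * (cmod (f (x + w)))^2) \<partial>lborel)
        \<le> ennreal 1 * (\<integral>\<^sup>+k. ennreal ((norm k)^2 * (cmod (iexp (k \<bullet> w) * g k))^2) \<partial>lborel)
          + ennreal C * (\<integral>\<^sup>+x. ennreal ((cmod (f (x + w)))^2) \<partial>lborel)"
      using C dom_sqrt_abs_laplacian_translate[OF f] fourier_plancherel_translate[OF fL2 fg] by blast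
    also have "\<dots> = M"
    proof -
      have "(\<integral>\<^sup>+x. ennreal ((cmod (f (x + w)))^2) \<partial>lborel) = (\<integral>\<^sup>+x. ennreal ((cmod (f x))^2) \<partial>lborel)"
        using nn_integral_lborel_translate[of "\<lambda>x. ennreal ((cmod (f x))^2)" w] by (simp add: add.commute)
      then show ?thesis
        by (simp add: M_def norm_mult)
    qed
    finally show ?thesis .
  qed
  moreover have "M < \<infinity>"
    using kinetic nn_integral_L2_finite[OF fL2] by (simp add: M_def ennreal_mult_less_top)
  ultimately show ?thesis
    by blast
qed

section \<open>Multiplication domains and Gaussian smearing\<close>

lemma dom_mult_sqrt_antimono:
  assumes "\<And>x. F2 x \<le> F1 x"
  shows "dom_mult_sqrt F1 \<subseteq> dom_mult_sqrt F2"
proof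
  fix f assume f: "f \<in> dom_mult_sqrt F1"
  have "(\<integral>\<^sup>+x. ennreal (F2 x * (cmod (f x))^2) \<partial>lborel) \<le> (\<integral>\<^sup>+x. ennreal (F1 x * (cmod (f x))^2) \<partial>lborel)"
    by (intro nn_integral_mono ennreal_leI mult_right_mono assms) simp
  then show "f \<in> dom_mult_sqrt F2"
    using f by (auto simp: dom_mult_sqrt_def)
qed

lemma dom_mult_sqrt_le_add_const:
  assumes [measurable]: "F2 \<in> borel_measurable borel"
    and nonneg: "\<And>x. 0 \<le> F2 x" and le: "\<And>x. F1 x \<le> F2 x + C"
  shows "dom_mult_sqrt F2 \<subseteq> dom_mult_sqrt F1"
proof
  fix f assume f: "f \<in> dom_mult_sqrt F2"
  then have fL2: "f \<in> L2" and finite: "(\<integral>\<^sup>+x. ennreal (F2 x * (cmod (f x))^2) \<partial>lborel) < \<infinity>"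
    by (auto simp: dom_mult_sqrt_def)
  have [measurable]: "f \<in> borel_measurable borel"
    using L2_D[OF fL2] by auto
  define C' where "C' = max C 0"
  have C': "C' \<ge> 0" "C \<le> C'"
    by (auto simp: C'_def)
  have "(\<integral>\<^sup>+x. ennreal (F1 x * (cmod (f x))^2) \<partial>lborel)
      \<le> (\<integral>\<^sup>+x. ennreal (F2 x * (cmod (f x))^2) + ennreal C' * ennreal ((cmod (f x))^2) \<partial>lborel)"
  proof (rule nn_integral_mono)
    fix x
    have "F1 x * (cmod (f x))^2 \<le> (F2 x + C') * (cmod (f x))^2"
      using le[of x] C' by (intro mult_right_mono) auto
    then have "ennreal (F1 x * (cmod (f x))^2) \<le> ennreal (F2 x * (cmod (f x))^2 + C' * (cmod (f x))^2)"
      by (intro ennreal_leI) (simp add: algebra_simps)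
    also have "\<dots> = ennreal (F2 x * (cmod (f x))^2) + ennreal C' * ennreal ((cmod (f x))^2)"
      using nonneg[of x] C' by (simp add: ennreal_plus ennreal_mult)
    finally show "ennreal (F1 x * (cmod (f x))^2) \<le> ennreal (F2 x * (cmod (f x))^2) + ennreal C' * ennreal ((cmod (f x))^2)" .
  qed
  also have "\<dots> = (\<integral>\<^sup>+x. ennreal (F2 x * (cmod (f x))^2) \<partial>lborel) + ennreal C' * (\<integral>\<^sup>+x. ennreal ((cmod (f x))^2) \<partial>lborel)"
    by (subst nn_integral_add) (auto simp: nn_integral_cmult)
  also have "\<dots> < \<infinity>"
    using finite nn_integral_L2_finite[OF fL2] by (simp add: ennreal_mult_less_top)
  finally show "f \<in> dom_mult_sqrt F1"
    using fL2 by (auto simp: dom_mult_sqrt_def)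
qed

lemma gauss_smear_eq_heat_kernel:
  "gauss_smear a W x = (\<integral>y. W y * heat_kernel a (x - y) \<partial>lborel)"
proof -
  let ?c = "(4*pi*a) powr (-(real DIM('a))/2)"
  have "gauss_smear a W x = (\<integral>y. ?c * (W y * exp (- ((norm (x - y))^2) / (4*a))) \<partial>lborel)"
    unfolding gauss_smear_def by (rule integral_mult_right_zero[symmetric])
  also have "\<dots> = (\<integral>y. W y * heat_kernel a (x - y) \<partial>lborel)"
    by (intro Bochner_Integration.integral_cong) (simp_all add: heat_kernel_def mult.left_commute)
  finally show ?thesis .
qed

lemma borel_measurable_gauss_smear[measurable]:
  fixes W :: "'a::euclidean_space \<Rightarrow> real"
  assumes [measurable]: "W \<in> borel_measurable borel"
  shows "gauss_smear a W \<in> borel_measurable borel"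
  unfolding gauss_smear_def[abs_def] by measurable

lemma abs_gauss_smear_le: "\<bar>gauss_smear a W x\<bar> \<le> gauss_smear a (\<lambda>x. \<bar>W x\<bar>) x"
  unfolding gauss_smear_eq_heat_kernel
  by (rule order_trans[OF integral_abs_bound]) (simp add: abs_mult)

lemma heat_kernel_diff_le:
  fixes x y :: "'a::euclidean_space"
  assumes a: "a > 0"
  shows "heat_kernel a (x - y)
    \<le> (4*pi*a) powr (-(real DIM('a))/2) * exp ((norm x)^2 / (4*a)) * exp (- (1/(8*a)) * (norm y)^2)"
proof -
  have "norm y \<le> norm (x - y) + norm x"
    using norm_triangle_ineq4[of x "x - y"] by (simp add: norm_minus_commute add.commute)
  then have "(norm y)^2 \<le> (norm (x - y) + norm x)^2"
    by (rule power_mono) simp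
  also have "\<dots> \<le> 2 * (norm (x - y))^2 + 2 * (norm x)^2"
    using sum_squares_bound[of "norm (x - y)" "norm x"] by (simp add: power2_sum)
  finally have "- ((norm (x - y))^2) / (4*a) \<le> (norm x)^2 / (4*a) + (- (1/(8*a)) * (norm y)^2)"
    using a by (simp add: field_simps)
  then have "exp (- ((norm (x - y))^2) / (4*a)) \<le> exp ((norm x)^2 / (4*a)) * exp (- (1/(8*a)) * (norm y)^2)"
    by (simp only: exp_le_cancel_iff exp_add[symmetric])
  then show ?thesis
    unfolding heat_kernel_def mult.assoc by (rule mult_left_mono) simp
qed

lemma integrable_mult_heat_kernel:
  fixes W :: "'a::euclidean_space \<Rightarrow> real"
  assumes a: "a > 0" and [measurable]: "W \<in> borel_measurable borel"
    and W: "\<And>t. t > 0 \<Longrightarrow> integrable lborel (\<lambda>x. \<bar>W x\<bar> * exp (- t * (norm x)^2))"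
  shows "integrable lborel (\<lambda>y. W y * heat_kernel a (x - y))"
proof (rule Bochner_Integration.integrable_bound)
  let ?c = "(4*pi*a) powr (-(real DIM('a))/2) * exp ((norm x)^2 / (4*a))"
  show "integrable lborel (\<lambda>y. ?c * (\<bar>W y\<bar> * exp (- (1/(8*a)) * (norm y)^2)))"
    using W[of "1/(8*a)"] a by simp
  show "(\<lambda>y. W y * heat_kernel a (x - y)) \<in> borel_measurable lborel"
    by measurable
  show "AE y in lborel. norm (W y * heat_kernel a (x - y)) \<le> norm (?c * (\<bar>W y\<bar> * exp (- (1/(8*a)) * (norm y)^2)))"
  proof (rule AE_I2)
    fix y
    have "\<bar>W y\<bar> * heat_kernel a (x - y) \<le> \<bar>W y\<bar> * (?c * exp (- (1/(8*a)) * (norm y)^2))"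
      using heat_kernel_diff_le[OF a, of x y] by (intro mult_left_mono) (simp_all add: mult.assoc)
    then show "norm (W y * heat_kernel a (x - y)) \<le> norm (?c * (\<bar>W y\<bar> * exp (- (1/(8*a)) * (norm y)^2)))"
      by (simp add: abs_mult mult_ac)
  qed
qed

lemma gauss_smear_abs_le_of_bounded_below:
  fixes V :: "'a::euclidean_space \<Rightarrow> real"
  assumes a: "a > 0" and [measurable]: "V \<in> borel_measurable borel"
    and V: "\<And>t. t > 0 \<Longrightarrow> integrable lborel (\<lambda>x. \<bar>V x\<bar> * exp (- t * (norm x)^2))"
    and c: "\<And>x. c \<le> V x"
  shows "gauss_smear a (\<lambda>x. \<bar>V x\<bar>) x \<le> \<bar>gauss_smear a V x\<bar> + 2 * \<bar>c\<bar>"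
proof -
  let ?G = "\<lambda>y. heat_kernel a (x - y)"
  have iV: "integrable lborel (\<lambda>y. V y * ?G y)"
    by (rule integrable_mult_heat_kernel[OF a _ V]) simp_all
  have iG: "integrable lborel ?G" and intG: "(\<integral>y. ?G y \<partial>lborel) = 1"
    using has_bochner_integral_heat_kernel_diff[OF a, of x] by (auto simp: has_bochner_integral_iff)
  have "gauss_smear a (\<lambda>x. \<bar>V x\<bar>) x \<le> (\<integral>y. V y * ?G y + 2 * \<bar>c\<bar> * ?G y \<partial>lborel)"
    unfolding gauss_smear_eq_heat_kernel
  proof (rule integral_mono)
    show "integrable lborel (\<lambda>y. \<bar>V y\<bar> * ?G y)"
      by (rule integrable_mult_heat_kernel[OF a]) (use V in auto)
    show "integrable lborel (\<lambda>y. V y * ?G y + 2 * \<bar>c\<bar> * ?G y)"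
      using iV iG by simp
    show "\<bar>V y\<bar> * ?G y \<le> V y * ?G y + 2 * \<bar>c\<bar> * ?G y" for y
      using c[of y] mult_right_mono[of "\<bar>V y\<bar>" "V y + 2 * \<bar>c\<bar>" "?G y"] by (simp add: algebra_simps)
  qed
  also have "\<dots> = gauss_smear a V x + 2 * \<bar>c\<bar>"
    using iV iG intG by (simp add: gauss_smear_eq_heat_kernel)
  finally show ?thesis
    by simp
qed

lemma nn_integral_gauss_smear_mult:
  fixes W :: "'a::euclidean_space \<Rightarrow> real" and f :: "'a \<Rightarrow> complex"
  assumes [measurable]: "W \<in> borel_measurable borel" "f \<in> borel_measurable borel"
    and W_nonneg: "\<And>x. 0 \<le> W x"
    and W_integrable: "\<And>x. integrable lborel (\<lambda>y. W y * heat_kernel a (x - y))"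
  shows "(\<integral>\<^sup>+x. ennreal (gauss_smear a W x * (cmod (f x))^2) \<partial>lborel)
       = (\<integral>\<^sup>+w. ennreal (heat_kernel a w) * (\<integral>\<^sup>+x. ennreal (W (x + w) * (cmod (f x))^2) \<partial>lborel) \<partial>lborel)"
proof -
  have smear: "ennreal (gauss_smear a W x) = (\<integral>\<^sup>+w. ennreal (W (x + w) * heat_kernel a w) \<partial>lborel)" for x
  proof -
    have "ennreal (gauss_smear a W x) = (\<integral>\<^sup>+y. ennreal (W y * heat_kernel a (x - y)) \<partial>lborel)"
      using W_integrable[of x] by (simp add: gauss_smear_eq_heat_kernel nn_integral_eq_integral W_nonneg)
    also have "\<dots> = (\<integral>\<^sup>+w. ennreal (W (x + w) * heat_kernel a (x - (x + w))) \<partial>lborel)"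
      by (rule nn_integral_lborel_translate[symmetric]) measurable
    finally show ?thesis
      by (simp add: heat_kernel_minus)
  qed
  have "(\<integral>\<^sup>+x. ennreal (gauss_smear a W x * (cmod (f x))^2) \<partial>lborel)
      = (\<integral>\<^sup>+x. (\<integral>\<^sup>+w. ennreal ((cmod (f x))^2) * ennreal (W (x + w) * heat_kernel a w) \<partial>lborel) \<partial>lborel)"
    by (simp add: ennreal_mult'' smear nn_integral_cmult mult.commute)
  also have "\<dots> = (\<integral>\<^sup>+w. (\<integral>\<^sup>+x. ennreal ((cmod (f x))^2) * ennreal (W (x + w) * heat_kernel a w) \<partial>lborel) \<partial>lborel)"
    by (rule lborel_pair.Fubini') measurable
  also have "\<dots> = (\<integral>\<^sup>+w. ennreal (heat_kernel a w) * (\<integral>\<^sup>+x. ennreal (W (x + w) * (cmod (f x))^2) \<partial>lborel) \<partial>lborel)"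
    by (subst nn_integral_cmult[symmetric]) (auto intro!: nn_integral_cong simp: W_nonneg ac_simps simp flip: ennreal_mult)
  finally show ?thesis .
qed

lemma dom_sqrt_abs_laplacian_subset_dom_gauss_smear:
  fixes V :: "'a::euclidean_space \<Rightarrow> real"
  assumes a: "a > 0" and [measurable]: "V \<in> borel_measurable borel"
    and V: "\<And>t. t > 0 \<Longrightarrow> integrable lborel (\<lambda>x. \<bar>V x\<bar> * exp (- t * (norm x)^2))"
    and form_bounded: "inf_form_bounded_laplacian (\<lambda>x. \<bar>V x\<bar>)"
  shows "dom_sqrt_abs_laplacian \<subseteq> dom_mult_sqrt (gauss_smear a (\<lambda>x. \<bar>V x\<bar>))"
proof
  fix f :: "'a \<Rightarrow> complex"
  assume f: "f \<in> dom_sqrt_abs_laplacian"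
  then have fL2: "f \<in> L2"
    by (simp add: dom_sqrt_abs_laplacian_def)
  have [measurable]: "f \<in> borel_measurable borel"
    using L2_D[OF fL2] by auto
  obtain M where M: "M < \<infinity>" and bound: "\<And>w. (\<integral>\<^sup>+x. ennreal (\<bar>V x\<bar> * (cmod (f (x + w)))^2) \<partial>lborel) \<le> M"
    using inf_form_bounded_laplacian_translate_bound[OF form_bounded f] by blast
  have "(\<integral>\<^sup>+x. ennreal (gauss_smear a (\<lambda>x. \<bar>V x\<bar>) x * (cmod (f x))^2) \<partial>lborel)
      = (\<integral>\<^sup>+w. ennreal (heat_kernel a w) * (\<integral>\<^sup>+x. ennreal (\<bar>V (x + w)\<bar> * (cmod (f x))^2) \<partial>lborel) \<partial>lborel)"
    by (rule nn_integral_gauss_smear_mult) (use V in \<open>auto intro!: integrable_mult_heat_kernel[OF a]\<close>)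
  also have "\<dots> \<le> (\<integral>\<^sup>+w. ennreal (heat_kernel a w) * M \<partial>(lborel :: 'a measure))"
  proof (rule nn_integral_mono)
    fix w :: 'a
    have "(\<integral>\<^sup>+x. ennreal (\<bar>V (x + w)\<bar> * (cmod (f x))^2) \<partial>lborel) \<le> M"
      using nn_integral_lborel_translate[of "\<lambda>x. ennreal (\<bar>V (x + w)\<bar> * (cmod (f x))^2)" "-w"] bound[of "-w"]
      by simp
    then show "ennreal (heat_kernel a w) * (\<integral>\<^sup>+x. ennreal (\<bar>V (x + w)\<bar> * (cmod (f x))^2) \<partial>lborel)
        \<le> ennreal (heat_kernel a w) * M"
      by (rule mult_left_mono) simp
  qed
  also have "\<dots> = M"
    by (simp add: nn_integral_multc nn_integral_heat_kernel[OF a])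
  finally show "f \<in> dom_mult_sqrt (gauss_smear a (\<lambda>x. \<bar>V x\<bar>))"
    using fL2 M by (simp add: dom_mult_sqrt_def)
qed

lemma coupling_const_pos:
  fixes rho omega :: "'a::euclidean_space \<Rightarrow> real"
  assumes "d \<ge> 2" "hbar > 0" "m > 0" "eps0 > 0" "q \<noteq> 0"
    and omega_nonneg: "\<And>k. omega k \<ge> 0"
    and integrable: "integrable lborel (\<lambda>k. (rho k / (sqrt (omega k))^3)^2)"
    and nonzero: "\<not> (AE k in lborel. rho k / (sqrt (omega k))^3 = 0)"
  shows "coupling_const d hbar q eps0 m rho omega > 0"
proof -
  have "(rho k / (sqrt (omega k))^3)^2 = (rho k)^2 / (omega k)^3" for k
  proof -
    have "((sqrt (omega k))^3)^2 = ((sqrt (omega k))^2)^3"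
      by (metis power_mult mult.commute)
    then show ?thesis
      using omega_nonneg[of k] by (simp add: power_divide)
  qed
  moreover have "(\<integral>k. (rho k / (sqrt (omega k))^3)^2 \<partial>lborel) \<noteq> 0"
    using integral_nonneg_eq_0_iff_AE[OF integrable] nonzero by simp
  moreover have "(\<integral>k. (rho k / (sqrt (omega k))^3)^2 \<partial>lborel) \<ge> 0"
    by simp
  ultimately have "(\<integral>k. (rho k)^2 / (omega k)^3 \<partial>lborel) > 0"
    by simp
  moreover have "(real d - 1) / (4 * real d) * (hbar * q^2 / (eps0 * m^2)) > 0"
    using assms(1-5) by simp
  ultimately show ?thesis
    unfolding coupling_const_def by (simp only: mult_pos_pos)
qed

theorem lemma5p2:
  fixes V omega rho :: "real^'n \<Rightarrow> real" and hbar m eps0 q a :: real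
  assumes "CARD('n) \<ge> 2"
    and "hbar > 0" and "m > 0" and "eps0 > 0" and "q \<noteq> 0"
    and "omega \<in> borel_measurable borel" and "\<forall>k. omega k \<ge> 0"
    and "AE k in lborel. omega k > 0"
    and "rho \<in> borel_measurable borel"
    and "\<forall>k k'. norm k = norm k' \<longrightarrow> rho k = rho k'"
    and "integrable lborel (\<lambda>k. (rho k / sqrt (omega k))^2)"
    and "\<not> (AE k in lborel. rho k / sqrt (omega k) = 0)"
    and "integrable lborel (\<lambda>k. (rho k / (sqrt (omega k))^3)^2)"
    and "\<not> (AE k in lborel. rho k / (sqrt (omega k))^3 = 0)"
    and a_def: "a = coupling_const CARD('n) hbar q eps0 m rho omega"
    and "V \<in> borel_measurable borel"
    and V1: "inf_form_bounded_laplacian (\<lambda>x. \<bar>V x\<bar>) \<or> (\<exists>c. \<forall>x. c \<le> V x)"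
    and V2: "\<forall>t>0. integrable lborel (\<lambda>x. \<bar>V x\<bar> * exp (- t * (norm x)^2))"
  shows "dom_sqrt_abs_laplacian \<inter> dom_mult_sqrt (gauss_smear a (\<lambda>x. \<bar>V x\<bar>))
       = dom_sqrt_abs_laplacian \<inter> dom_mult_sqrt (\<lambda>x. \<bar>gauss_smear a V x\<bar>)"
proof -
  have a: "a > 0"
    unfolding a_def using assms(1-5,7,13,14) by (intro coupling_const_pos) auto
  note V_measurable[measurable] = \<open>V \<in> borel_measurable borel\<close>
  have V_gaussian: "\<And>t. t > 0 \<Longrightarrow> integrable lborel (\<lambda>x. \<bar>V x\<bar> * exp (- t * (norm x)^2))"
    using V2 by blast
  have smeared_abs: "dom_mult_sqrt (gauss_smear a (\<lambda>x. \<bar>V x\<bar>)) \<subseteq> dom_mult_sqrt (\<lambda>x. \<bar>gauss_smear a V x\<bar>)"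
    by (intro dom_mult_sqrt_antimono abs_gauss_smear_le)
  from V1 show ?thesis
  proof
    assume "inf_form_bounded_laplacian (\<lambda>x. \<bar>V x\<bar>)"
    then have "dom_sqrt_abs_laplacian \<subseteq> dom_mult_sqrt (gauss_smear a (\<lambda>x. \<bar>V x\<bar>))"
      using dom_sqrt_abs_laplacian_subset_dom_gauss_smear[OF a V_measurable V_gaussian] by blast
    with smeared_abs show ?thesis
      by blast
  next
    assume "\<exists>c. \<forall>x. c \<le> V x"
    then obtain c where "\<And>x. c \<le> V x"
      by blast
    then have "dom_mult_sqrt (\<lambda>x. \<bar>gauss_smear a V x\<bar>) \<subseteq> dom_mult_sqrt (gauss_smear a (\<lambda>x. \<bar>V x\<bar>))"
      by (intro dom_mult_sqrt_le_add_const[where C = "2 * \<bar>c\<bar>"]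
          gauss_smear_abs_le_of_bounded_below[OF a V_measurable V_gaussian]) simp_all
    with smeared_abs show ?thesis
      by blast
  qed
qed

end
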